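(* Let $X$ and $Y$ be nontrivial metrizable spaces. The following are equivalent: (1) $X$ is countable; (2) $Q_p(X,\mathbb{D})$ is Fr\'{e}chet-Urysohn; (3) $Q_p(X,Y)$ is Fr\'{e}chet-Urysohn; (4) $Q_p(X,Y)$ is first countable; (5) $Q_p(X,Y)$ is metrizable.
   Context: A function $f:X\to Y$ is quasicontinuous if for every $x\in X$, every open $V\ni f(x)$ and every open $U\ni x$ there is a nonempty open $W\subseteq U$ with $f(W)\subseteq V$. $Q_p(X,Y)$ is the set of all quasicontinuous functions $X\to Y$ with the topology of pointwise convergence; $\mathbb{D}=\{0,1\}$ is the discrete two-point space. A space $Z$ is Fr\'{e}chet-Urysohn if for every $A\subseteq Z$ and $z\in\overline{A}$ there is a sequence in $A$ converging to $z$. Nontrivial means having more than one point. *)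

theory Defs
  imports "HOL-Analysis.Analysis"
begin

definition quasicontinuous_map :: "'a topology \<Rightarrow> 'b topology \<Rightarrow> ('a \<Rightarrow> 'b) \<Rightarrow> bool" where
  "quasicontinuous_map X Y f \<longleftrightarrow>
     f ` topspace X \<subseteq> topspace Y \<and>
     (\<forall>x \<in> topspace X. \<forall>V U. openin Y V \<and> f x \<in> V \<and> openin X U \<and> x \<in> U \<longrightarrow>
        (\<exists>W. openin X W \<and> W \<noteq> {} \<and> W \<subseteq> U \<and> f ` W \<subseteq> V))"

text \<open>Q_p(X,Y): quasicontinuous functions (extensional on topspace X) with the
  topology of pointwise convergence, i.e. the subspace of the product Y^X.\<close>
definition Qp :: "'a topology \<Rightarrow> 'b topology \<Rightarrow> ('a \<Rightarrow> 'b) topology" where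
  "Qp X Y = subtopology (product_topology (\<lambda>_. Y) (topspace X))
              {f \<in> extensional (topspace X). quasicontinuous_map X Y f}"

definition two_point_discrete :: "bool topology" where
  "two_point_discrete = discrete_topology (UNIV :: bool set)"

definition frechet_urysohn :: "'a topology \<Rightarrow> bool" where
  "frechet_urysohn Z \<longleftrightarrow>
     (\<forall>A z. A \<subseteq> topspace Z \<and> z \<in> Z closure_of A \<longrightarrow>
        (\<exists>\<sigma>. range \<sigma> \<subseteq> A \<and> limitin Z \<sigma> z sequentially))"

definition nontrivial_space :: "'a topology \<Rightarrow> bool" where
  "nontrivial_space X \<longleftrightarrow> (\<exists>a b. a \<in> topspace X \<and> b \<in> topspace X \<and> a \<noteq> b)"

end

theory Submission
  imports Defs
begin

(*
  If X is countable, Q_p(X,Y) is a subspace of the countable power Y^X, hence metrizable.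

  Now let X be uncountable and a, b distinct points of Y.  The function that is a on the
  closure of an open set and b elsewhere is quasicontinuous.  If U F is open with
  F \<subseteq> closure (U F) for every finite F, these functions converge to the constant a along
  the finite sets, so a Frechet-Urysohn Q_p(X,Y) would yield finite sets F_n with every
  point eventually in closure (U (F_n)).  We prevent this by choosing closure (U F) inside
  F \<union> G F, for an open G F whose closure contains the non-isolated points of F.

  Call a closed set thin if its interior points are isolated.  If X has an uncountable thin
  set N, take G F = X - N: no countable union of finite sets covers N.  Otherwise X is
  separable, there is a countable family V_j of open sets containing non-isolated points
  that is a pi-base at the non-isolated points, and an infinite closed nowhere dense set W
  with distinct points w_j.  Take G F = X - (W \<union> Q F), where Q F contains a point of
  V_j - F whenever w_j \<in> F.  Some closed set of the form \<Inter>n\<ge>m. closure (U (F_n)) is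
  uncountable, hence not thin, so it contains some V_j; as w_j \<in> W eventually lies in
  closure (U (F_n)), it lies in F_n, and then closure (U (F_n)) misses a point of V_j.
*)

lemma first_countable_imp_frechet_urysohn:
  assumes "first_countable Z"
  shows "frechet_urysohn Z"
  unfolding frechet_urysohn_def
proof (intro allI impI, elim conjE)
  fix A z assume "A \<subseteq> topspace Z" and z: "z \<in> Z closure_of A"
  then have "z \<in> topspace Z"
    using closure_of_subset_topspace by fastforce
  then obtain \<B> where "countable \<B>" and \<B>open: "\<And>V. V \<in> \<B> \<Longrightarrow> openin Z V"
    and \<B>base: "\<And>U. openin Z U \<Longrightarrow> z \<in> U \<Longrightarrow> \<exists>V\<in>\<B>. z \<in> V \<and> V \<subseteq> U"
    using assms unfolding first_countable_def by metis
  define \<B>z where "\<B>z = {V\<in>\<B>. z \<in> V}"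
  have "\<B>z \<noteq> {}"
    using \<B>base[of "topspace Z"] \<open>z \<in> topspace Z\<close> unfolding \<B>z_def by auto
  moreover have "countable \<B>z"
    using \<open>countable \<B>\<close> unfolding \<B>z_def by auto
  ultimately have range_b: "range (from_nat_into \<B>z) = \<B>z"
    by (simp add: range_from_nat_into)
  define C where "C n = (\<Inter>i\<le>n. from_nat_into \<B>z i)" for n
  have "openin Z (C n)" "z \<in> C n" for n
    using range_b \<B>open unfolding C_def \<B>z_def by (auto intro!: openin_Inter)
  then have "\<exists>y. y \<in> A \<and> y \<in> C n" for n
    using z unfolding in_closure_of by blast
  then obtain \<sigma> where \<sigma>: "\<And>n. \<sigma> n \<in> A \<and> \<sigma> n \<in> C n"
    by metis
  have "limitin Z \<sigma> z sequentially"
    unfolding limitin_def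
  proof (intro conjI allI impI \<open>z \<in> topspace Z\<close>, elim conjE)
    fix U assume "openin Z U" "z \<in> U"
    then obtain V where "V \<in> \<B>z" "V \<subseteq> U"
      using \<B>base unfolding \<B>z_def by blast
    then obtain k where "from_nat_into \<B>z k = V"
      using range_b by (metis rangeE)
    then have "\<sigma> n \<in> U" if "k \<le> n" for n
      using \<sigma>[of n] that \<open>V \<subseteq> U\<close> unfolding C_def by blast
    then show "\<forall>\<^sub>F n in sequentially. \<sigma> n \<in> U"
      unfolding eventually_sequentially by blast
  qed
  then show "\<exists>\<sigma>. range \<sigma> \<subseteq> A \<and> limitin Z \<sigma> z sequentially"
    using \<sigma> by blast
qed

lemma metrizable_imp_frechet_urysohn: "metrizable_space Z \<Longrightarrow> frechet_urysohn Z"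
  by (simp add: first_countable_imp_frechet_urysohn metrizable_imp_first_countable)

section \<open>Pointwise convergence of quasicontinuous functions\<close>

lemma topspace_Qp:
  "topspace (Qp X Y) = {f \<in> topspace X \<rightarrow>\<^sub>E topspace Y. quasicontinuous_map X Y f}"
  unfolding Qp_def PiE_def extensional_def by auto

lemma metrizable_space_Qp:
  assumes "countable (topspace X)" "metrizable_space Y"
  shows "metrizable_space (Qp X Y)"
  unfolding Qp_def
proof (rule metrizable_space_subtopology)
  have "countable {i \<in> topspace X. \<not> (\<exists>a. topspace Y \<subseteq> {a})}"
    using assms(1) by (rule countable_subset[rotated]) blast
  then show "metrizable_space (product_topology (\<lambda>_. Y) (topspace X))"
    using assms(2) by (simp add: metrizable_space_product_topology)
qed

lemma limitin_Qp_pointwise: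
  assumes "limitin (Qp X Y) \<sigma> f sequentially" "x \<in> topspace X"
  shows "limitin Y (\<lambda>n. \<sigma> n x) (f x) sequentially"
proof -
  have "limitin (product_topology (\<lambda>_. Y) (topspace X)) \<sigma> f sequentially"
    using assms(1) unfolding Qp_def limitin_subtopology by blast
  then show ?thesis
    using assms(2) unfolding limitin_componentwise by blast
qed

lemma in_closure_of_Qp:
  assumes f: "f \<in> topspace (Qp X Y)" and A: "A \<subseteq> topspace (Qp X Y)"
    and agree: "\<And>K. finite K \<Longrightarrow> K \<subseteq> topspace X \<Longrightarrow> \<exists>h\<in>A. \<forall>x\<in>K. h x = f x"
  shows "f \<in> Qp X Y closure_of A"
  unfolding in_closure_of
proof (intro conjI allI impI f, elim conjE)
  fix T assume "f \<in> T" "openin (Qp X Y) T"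
  then obtain T' where T': "openin (product_topology (\<lambda>_. Y) (topspace X)) T'"
    "T = T' \<inter> {f \<in> extensional (topspace X). quasicontinuous_map X Y f}"
    unfolding Qp_def openin_subtopology by blast
  then obtain U where finU: "finite {x \<in> topspace X. U x \<noteq> topspace Y}"
    and fU: "f \<in> Pi\<^sub>E (topspace X) U" and UT': "Pi\<^sub>E (topspace X) U \<subseteq> T'"
    using \<open>f \<in> T\<close> unfolding openin_product_topology_alt by blast
  obtain h where "h \<in> A" and h: "\<And>x. x \<in> topspace X \<Longrightarrow> U x \<noteq> topspace Y \<Longrightarrow> h x = f x"
    using agree[OF finU] by blast
  have hQ: "h \<in> topspace X \<rightarrow>\<^sub>E topspace Y" "quasicontinuous_map X Y h"
    using \<open>h \<in> A\<close> A unfolding topspace_Qp by blast+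
  have "h \<in> Pi\<^sub>E (topspace X) U"
  proof (rule PiE_I)
    fix x assume x: "x \<in> topspace X"
    show "h x \<in> U x"
    proof (cases "U x = topspace Y")
      case True
      then show ?thesis using hQ x by blast
    next
      case False
      then show ?thesis using h[OF x] fU x by (simp add: PiE_iff)
    qed
  next
    fix x assume "x \<notin> topspace X"
    then show "h x = undefined"
      using hQ by blast
  qed
  then have "h \<in> T"
    using hQ T'(2) UT' by (auto simp: PiE_def)
  then show "\<exists>y. y \<in> A \<and> y \<in> T"
    using \<open>h \<in> A\<close> by blast
qed

lemma quasicontinuous_map_closure_indicator:
  assumes "openin X U" "a \<in> topspace Y" "b \<in> topspace Y"
  shows "quasicontinuous_map X Y (\<lambda>x. if x \<in> X closure_of U then a else b)"
  unfolding quasicontinuous_map_def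
proof (intro conjI ballI allI impI)
  show "(\<lambda>x. if x \<in> X closure_of U then a else b) ` topspace X \<subseteq> topspace Y"
    using assms by auto
next
  fix x V W
  assume "openin Y V \<and> (if x \<in> X closure_of U then a else b) \<in> V \<and> openin X W \<and> x \<in> W"
  then have fx: "(if x \<in> X closure_of U then a else b) \<in> V" and "openin X W" "x \<in> W"
    by auto
  show "\<exists>W'. openin X W' \<and> W' \<noteq> {} \<and> W' \<subseteq> W \<and> (\<lambda>x. if x \<in> X closure_of U then a else b) ` W' \<subseteq> V"
  proof (cases "x \<in> X closure_of U")
    case True
    then have "W \<inter> U \<noteq> {}"
      using \<open>openin X W\<close> \<open>x \<in> W\<close> unfolding in_closure_of by blast
    moreover have "W \<inter> U \<subseteq> X closure_of U"
      using closure_of_subset openin_subset[OF assms(1)] by blast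
    ultimately show ?thesis
      using True fx \<open>openin X W\<close> assms(1) by (intro exI[of _ "W \<inter> U"]) auto
  next
    case False
    then show ?thesis
      using fx \<open>openin X W\<close> \<open>x \<in> W\<close>
      by (intro exI[of _ "W - X closure_of U"]) (auto intro: openin_diff)
  qed
qed

lemma quasicontinuous_map_restrict:
  "quasicontinuous_map X Y (restrict f (topspace X)) \<longleftrightarrow> quasicontinuous_map X Y f"
proof -
  have "restrict f (topspace X) ` W = f ` W" if "openin X W" for W
    using openin_subset[OF that] by (metis image_restrict_eq restrict_restrict inf.absorb_iff2)
  then show ?thesis
    unfolding quasicontinuous_map_def by (smt (verit, best) image_restrict_eq restrict_apply')
qed

lemma continuous_imp_quasicontinuous_map:
  assumes "continuous_map X Y f"
  shows "quasicontinuous_map X Y f"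
  unfolding quasicontinuous_map_def
proof (intro conjI ballI allI impI)
  show "f ` topspace X \<subseteq> topspace Y"
    using assms continuous_map_image_subset_topspace by blast
next
  fix x V U assume x: "x \<in> topspace X" and "openin Y V \<and> f x \<in> V \<and> openin X U \<and> x \<in> U"
  then have "openin X (U \<inter> {y \<in> topspace X. f y \<in> V})" "x \<in> U \<inter> {y \<in> topspace X. f y \<in> V}"
    using assms by (auto simp: continuous_map)
  then show "\<exists>W. openin X W \<and> W \<noteq> {} \<and> W \<subseteq> U \<and> f ` W \<subseteq> V"
    by (intro exI[of _ "U \<inter> {y \<in> topspace X. f y \<in> V}"]) auto
qed

lemma closure_indicator_in_topspace_Qp:
  assumes "openin X U" "a \<in> topspace Y" "b \<in> topspace Y"
  shows "restrict (\<lambda>x. if x \<in> X closure_of U then a else b) (topspace X) \<in> topspace (Qp X Y)"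
  using assms quasicontinuous_map_closure_indicator[OF assms]
    quasicontinuous_map_restrict[of X Y "\<lambda>x. if x \<in> X closure_of U then a else b"]
  unfolding topspace_Qp by auto

lemma const_in_topspace_Qp:
  assumes "a \<in> topspace Y"
  shows "restrict (\<lambda>_. a) (topspace X) \<in> topspace (Qp X Y)"
  using assms continuous_imp_quasicontinuous_map[of X Y "\<lambda>_. a"]
    quasicontinuous_map_restrict[of X Y "\<lambda>_. a"]
  unfolding topspace_Qp by auto

definition no_sequential_closure_cover :: "'a topology \<Rightarrow> ('a set \<Rightarrow> 'a set) \<Rightarrow> bool" where
  "no_sequential_closure_cover X U \<longleftrightarrow>
     (\<forall>F. finite F \<and> F \<subseteq> topspace X \<longrightarrow> openin X (U F) \<and> F \<subseteq> X closure_of U F) \<and>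
     (\<forall>Fs. (\<forall>n. finite (Fs n) \<and> Fs n \<subseteq> topspace X) \<longrightarrow>
        (\<exists>x\<in>topspace X. \<exists>\<^sub>F n in sequentially. x \<notin> X closure_of U (Fs n)))"

lemma not_frechet_urysohn_Qp:
  assumes "t1_space Y" and ab: "a \<in> topspace Y" "b \<in> topspace Y" "a \<noteq> b"
    and cover: "no_sequential_closure_cover X U"
  shows "\<not> frechet_urysohn (Qp X Y)"
proof
  assume FU: "frechet_urysohn (Qp X Y)"
  define ind where "ind F = restrict (\<lambda>x. if x \<in> X closure_of U F then a else b) (topspace X)" for F
  define A where "A = ind ` {F. finite F \<and> F \<subseteq> topspace X}"
  define c where "c = restrict (\<lambda>_. a) (topspace X)"
  have U: "openin X (U F)" "F \<subseteq> X closure_of U F" if "finite F" "F \<subseteq> topspace X" for F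
    using cover that unfolding no_sequential_closure_cover_def by blast+
  have A: "A \<subseteq> topspace (Qp X Y)"
    using U ab unfolding A_def ind_def by (auto intro: closure_indicator_in_topspace_Qp)
  have c: "c \<in> topspace (Qp X Y)"
    unfolding c_def using ab(1) by (rule const_in_topspace_Qp)
  have agree: "\<exists>h\<in>A. \<forall>x\<in>K. h x = c x" if "finite K" "K \<subseteq> topspace X" for K
  proof
    show "ind K \<in> A"
      using that unfolding A_def by blast
    show "\<forall>x\<in>K. ind K x = c x"
      using U(2)[OF that] that unfolding ind_def c_def by auto
  qed
  have "c \<in> Qp X Y closure_of A"
    using in_closure_of_Qp[OF c A agree] .
  then obtain \<sigma> where "range \<sigma> \<subseteq> A" and lim: "limitin (Qp X Y) \<sigma> c sequentially"
    using FU A unfolding frechet_urysohn_def by blast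
  then have "\<exists>F. finite F \<and> F \<subseteq> topspace X \<and> \<sigma> n = ind F" for n
    unfolding A_def by blast
  then obtain Fs where Fs: "\<And>n. finite (Fs n) \<and> Fs n \<subseteq> topspace X" and \<sigma>: "\<And>n. \<sigma> n = ind (Fs n)"
    by metis
  obtain V where "openin Y V" "a \<in> V" "b \<notin> V"
    using \<open>t1_space Y\<close> ab unfolding t1_space_def by metis
  obtain x where x: "x \<in> topspace X" and "\<exists>\<^sub>F n in sequentially. x \<notin> X closure_of U (Fs n)"
    using cover Fs unfolding no_sequential_closure_cover_def by blast
  moreover have "limitin Y (\<lambda>n. \<sigma> n x) a sequentially"
    using limitin_Qp_pointwise[OF lim x] x unfolding c_def by simp
  then have "\<forall>\<^sub>F n in sequentially. \<sigma> n x \<in> V"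
    using \<open>openin Y V\<close> \<open>a \<in> V\<close> unfolding limitin_def by blast
  then have "\<forall>\<^sub>F n in sequentially. x \<in> X closure_of U (Fs n)"
    by (rule eventually_mono) (use x \<open>b \<notin> V\<close> in \<open>simp add: \<sigma> ind_def split: if_splits\<close>)
  ultimately show False
    by (simp add: frequently_def)
qed

section \<open>Isolated points and thin sets\<close>

(* In a space without isolated points these are the closed nowhere dense sets. *)
definition thin_closedin :: "'a topology \<Rightarrow> 'a set \<Rightarrow> bool" where
  "thin_closedin X N \<longleftrightarrow> closedin X N \<and> (\<forall>x \<in> X interior_of N. openin X {x})"

lemma openin_isolated_points: "openin X {x \<in> topspace X. openin X {x}}"
proof -
  have "openin X (\<Union>x\<in>{x \<in> topspace X. openin X {x}}. {x})"
    by (rule openin_Union) auto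
  then show ?thesis
    by simp
qed

lemma nonisolated_in_closure_of_complement:
  assumes "t1_space X" and C: "closedin X C" "X interior_of C = {}" and "finite Q"
    and x: "x \<in> topspace X" "\<not> openin X {x}"
  shows "x \<in> X closure_of (topspace X - (C \<union> Q))"
proof -
  have "x \<notin> X interior_of (C \<union> Q)"
  proof
    assume x_int: "x \<in> X interior_of (C \<union> Q)"
    have "finite (topspace X \<inter> Q - {x})" "topspace X \<inter> Q - {x} \<subseteq> topspace X"
      using \<open>finite Q\<close> by auto
    then have "closedin X (topspace X \<inter> Q - {x})"
      using \<open>t1_space X\<close> unfolding t1_space_closedin_finite by blast
    then have "openin X (X interior_of (C \<union> Q) - (topspace X \<inter> Q - {x}))" (is "openin X ?U")
      by (intro openin_diff) auto
    moreover have "?U \<subseteq> C \<union> {x}"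
      using interior_of_subset[of X "C \<union> Q"] openin_subset[of X "X interior_of (C \<union> Q)"] by auto
    moreover have "x \<in> ?U"
      using x_int by blast
    ultimately show False
    proof (cases "x \<in> C")
      case True
      then have "?U \<subseteq> X interior_of C"
        using \<open>?U \<subseteq> C \<union> {x}\<close> \<open>openin X ?U\<close> by (simp add: interior_of_maximal insert_absorb)
      then show False
        using \<open>x \<in> ?U\<close> C(2) by blast
    next
      case False
      then have "?U - C = {x}"
        using \<open>?U \<subseteq> C \<union> {x}\<close> \<open>x \<in> ?U\<close> by blast
      moreover have "openin X (?U - C)"
        using \<open>openin X ?U\<close> C(1) by blast
      ultimately show False
        using x(2) by simp
    qed
  qed
  then show ?thesis
    using x(1) closure_of_complement[of X "C \<union> Q"] by blast
qed

lemma infinite_open_nonisolated: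
  assumes "t1_space X" "openin X V" "z \<in> V" "\<not> openin X {z}"
  shows "infinite V"
proof
  assume "finite V"
  then have "closedin X (V - {z})"
    using assms(1,2) openin_subset unfolding t1_space_closedin_finite by blast
  then have "openin X (V - (V - {z}))"
    using assms(2) by blast
  moreover have "V - (V - {z}) = {z}"
    using assms(3) by blast
  ultimately show False
    using assms(4) by simp
qed

lemma finite_witness_removal:
  assumes "countable \<V>" "infinite W" and "\<And>V. V \<in> \<V> \<Longrightarrow> infinite V"
  obtains wit Q where "\<And>V. wit V \<in> W" "\<And>F. finite F \<Longrightarrow> finite (Q F)"
    "\<And>F. finite F \<Longrightarrow> Q F \<subseteq> \<Union>\<V>"
    "\<And>F V. finite F \<Longrightarrow> V \<in> \<V> \<Longrightarrow> wit V \<in> F \<Longrightarrow> \<exists>q \<in> V \<inter> Q F. q \<notin> F"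
proof -
  obtain f :: "nat \<Rightarrow> _" where "inj f" "range f \<subseteq> W"
    using infinite_countable_subset[OF \<open>infinite W\<close>] by blast
  define wit where "wit V = f (to_nat_on \<V> V)" for V
  have "inj_on wit \<V>"
    unfolding wit_def using \<open>inj f\<close> inj_on_to_nat_on[OF \<open>countable \<V>\<close>]
    by (simp add: inj_on_def)
  have "V - F \<noteq> {}" if "finite F" "V \<in> \<V>" for F V
    using infinite_imp_nonempty[OF Diff_infinite_finite[OF that(1) assms(3)[OF that(2)]]] .
  then have "\<forall>F V. \<exists>q. finite F \<and> V \<in> \<V> \<longrightarrow> q \<in> V - F"
    by blast
  then obtain q where q: "\<And>F V. finite F \<Longrightarrow> V \<in> \<V> \<Longrightarrow> q F V \<in> V - F"
    by metis
  define Q where "Q F = q F ` {V \<in> \<V>. wit V \<in> F}" for F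
  show thesis
  proof (rule that)
    show "wit V \<in> W" for V
      unfolding wit_def using \<open>range f \<subseteq> W\<close> by blast
    show "finite (Q F)" if "finite F" for F
    proof -
      have "finite (wit -` F \<inter> \<V>)"
        using \<open>finite F\<close> \<open>inj_on wit \<V>\<close> by (rule finite_vimage_IntI)
      moreover have "{V \<in> \<V>. wit V \<in> F} = wit -` F \<inter> \<V>"
        by blast
      ultimately show ?thesis
        unfolding Q_def by simp
    qed
    show "Q F \<subseteq> \<Union>\<V>" if "finite F" for F
      unfolding Q_def using q[OF that] by blast
    show "\<exists>q \<in> V \<inter> Q F. q \<notin> F" if "finite F" "V \<in> \<V>" "wit V \<in> F" for F V
      using q[OF that(1,2)] that unfolding Q_def by blast
  qed
qed

context Metric_space
begin

section \<open>Closures of open sets in a metric space\<close>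

lemma closedin_finite: "finite S \<Longrightarrow> S \<subseteq> M \<Longrightarrow> closedin mtopology S"
  using t1_space_mtopology t1_space_closedin_finite by (metis topspace_mtopology)

lemma closure_of_Union_shrinking:
  assumes "x \<in> M" and "\<And>k. closedin mtopology (C k)" and "\<And>k. C k \<subseteq> mball x (inverse (Suc k))"
  shows "mtopology closure_of (\<Union>k. C k) \<subseteq> insert x (\<Union>k. C k)"
proof
  fix y assume y: "y \<in> mtopology closure_of (\<Union>k. C k)"
  show "y \<in> insert x (\<Union>k. C k)"
  proof (cases "y = x")
    case False
    have "y \<in> M"
      using y closure_of_subset_topspace by fastforce
    then have "d x y > 0"
      using False \<open>x \<in> M\<close> \<open>y \<in> M\<close> by simp
    then obtain K where K: "inverse (real (Suc K)) < d x y"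
      using reals_Archimedean by blast
    define D where "D = (\<Union>k<K. C k) \<union> mcball x (inverse (Suc K))"
    have "C k \<subseteq> D" for k
    proof (cases "k < K")
      case False
      then have "inverse (real (Suc k)) \<le> inverse (real (Suc K))"
        by (simp add: le_imp_inverse_le)
      then have "mball x (inverse (Suc k)) \<subseteq> mcball x (inverse (Suc K))"
        by (meson mball_subset_mcball mcball_subset_concentric order_trans)
      then show ?thesis
        using assms(3)[of k] unfolding D_def by blast
    qed (auto simp: D_def)
    moreover have "closedin mtopology D"
      unfolding D_def using assms(2) by (intro closedin_Un closedin_Union) auto
    ultimately have "mtopology closure_of (\<Union>k. C k) \<subseteq> D"
      by (intro closure_of_minimal) auto
    then have "y \<in> D"
      using y by blast
    moreover have "y \<notin> mcball x (inverse (Suc K))"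
      using K by auto
    ultimately show ?thesis
      unfolding D_def by blast
  qed simp
qed

lemma mcball_in_open_near:
  assumes G: "openin mtopology G" and x: "x \<in> mtopology closure_of G" and "\<epsilon> > 0"
  obtains c \<rho> where "c \<in> G" "\<rho> > 0" "mcball c \<rho> \<subseteq> G \<inter> mball x \<epsilon>"
proof -
  have "x \<in> M" "\<forall>r>0. \<exists>c\<in>G. c \<in> mball x r"
    using x unfolding metric_closure_of by blast+
  then obtain c where c: "c \<in> G" "c \<in> mball x (\<epsilon> / 2)"
    using \<open>\<epsilon> > 0\<close> half_gt_zero by blast
  then obtain r where "r > 0" "mball c r \<subseteq> G"
    using G unfolding openin_mtopology by blast
  define \<rho> where "\<rho> = min (r / 2) (\<epsilon> / 2)"
  have "\<rho> > 0" "\<rho> < r" "\<rho> \<le> \<epsilon> / 2"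
    unfolding \<rho>_def using \<open>r > 0\<close> \<open>\<epsilon> > 0\<close> by auto
  have "mcball c \<rho> \<subseteq> G"
    using mcball_subset_mball_concentric[OF \<open>\<rho> < r\<close>] \<open>mball c r \<subseteq> G\<close> by blast
  moreover have "mcball c \<rho> \<subseteq> mball x \<epsilon>"
  proof
    fix y assume y: "y \<in> mcball c \<rho>"
    have "d x y \<le> d x c + d c y"
      using c y \<open>x \<in> M\<close> by (intro triangle) auto
    also have "\<dots> < \<epsilon>"
      using c y \<open>\<rho> \<le> \<epsilon> / 2\<close> by auto
    finally show "y \<in> mball x \<epsilon>"
      using y \<open>x \<in> M\<close> by auto
  qed
  ultimately show thesis
    using that c(1) \<open>\<rho> > 0\<close> by blast
qed

lemma exists_open_subset_closure_insert:
  assumes G: "openin mtopology G" and x: "x \<in> mtopology closure_of G"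
  obtains V where "openin mtopology V" "V \<subseteq> G" "x \<in> mtopology closure_of V"
    "mtopology closure_of V \<subseteq> insert x G"
proof -
  have "x \<in> M"
    using x closure_of_subset_topspace by fastforce
  have "\<exists>c \<rho>. c \<in> G \<and> \<rho> > 0 \<and> mcball c \<rho> \<subseteq> G \<inter> mball x (inverse (Suc k))" for k
  proof -
    obtain c \<rho> where "c \<in> G" "\<rho> > 0" "mcball c \<rho> \<subseteq> G \<inter> mball x (inverse (Suc k))"
      using mcball_in_open_near[OF G x, of "inverse (Suc k)"] by auto
    then show ?thesis
      by blast
  qed
  then obtain c \<rho> where c: "\<And>k. c k \<in> G" and \<rho>: "\<And>k. \<rho> k > 0"
    and ball: "\<And>k. mcball (c k) (\<rho> k) \<subseteq> G \<inter> mball x (inverse (Suc k))"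
    by metis
  define V where "V = (\<Union>k. mball (c k) (\<rho> k))"
  have "openin mtopology V"
    unfolding V_def by (auto intro: openin_Union)
  have "V \<subseteq> (\<Union>k. mcball (c k) (\<rho> k))"
    unfolding V_def using mball_subset_mcball by blast
  then have "mtopology closure_of V \<subseteq> mtopology closure_of (\<Union>k. mcball (c k) (\<rho> k))"
    by (rule closure_of_mono)
  also have "\<dots> \<subseteq> insert x (\<Union>k. mcball (c k) (\<rho> k))"
    using ball by (intro closure_of_Union_shrinking \<open>x \<in> M\<close> closedin_mcball) blast
  also have "\<dots> \<subseteq> insert x G"
    using ball by blast
  finally have "mtopology closure_of V \<subseteq> insert x G" .
  have c_ball: "c k \<in> mball (c k) (\<rho> k)" for k
    using c[of k] \<rho>[of k] G openin_subset by fastforce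
  then have c_in_V: "c k \<in> V" for k
    unfolding V_def by blast
  have "x \<in> mtopology closure_of V"
    unfolding metric_closure_of
  proof (intro CollectI conjI allI impI \<open>x \<in> M\<close>)
    fix r :: real assume "r > 0"
    then obtain k where "inverse (real (Suc k)) < r"
      using reals_Archimedean by blast
    moreover have "c k \<in> mball x (inverse (Suc k))"
      using ball[of k] c_ball[of k] mball_subset_mcball by blast
    ultimately show "\<exists>y\<in>V. y \<in> mball x r"
      using c_in_V[of k] by (intro bexI[of _ "c k"]) auto
  qed
  moreover have "V \<subseteq> G"
    unfolding V_def using ball mball_subset_mcball by blast
  ultimately show thesis
    using that \<open>openin mtopology V\<close> \<open>mtopology closure_of V \<subseteq> insert x G\<close> by blast
qed

lemma exists_open_subset_closure_Un:
  assumes G: "openin mtopology G" and "finite F" "F \<subseteq> mtopology closure_of G"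
  shows "\<exists>V. openin mtopology V \<and> V \<subseteq> G \<and> F \<subseteq> mtopology closure_of V \<and>
    mtopology closure_of V \<subseteq> F \<union> G"
  using \<open>finite F\<close> \<open>F \<subseteq> mtopology closure_of G\<close>
proof (induction F)
  case empty
  show ?case
    by (intro exI[of _ "{}"]) auto
next
  case (insert x F)
  then obtain V1 where "openin mtopology V1" "V1 \<subseteq> G" "F \<subseteq> mtopology closure_of V1"
    "mtopology closure_of V1 \<subseteq> F \<union> G"
    by auto
  moreover obtain V2 where "openin mtopology V2" "V2 \<subseteq> G" "x \<in> mtopology closure_of V2"
    "mtopology closure_of V2 \<subseteq> insert x G"
    using exists_open_subset_closure_insert[OF G] insert.prems by blast
  ultimately show ?case
    by (intro exI[of _ "V1 \<union> V2"]) auto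
qed

lemma exists_open_closure_between:
  assumes G: "openin mtopology G" and F: "finite F" "F \<subseteq> M"
    and nonisolated: "\<And>x. x \<in> F \<Longrightarrow> \<not> openin mtopology {x} \<Longrightarrow> x \<in> mtopology closure_of G"
  obtains V where "openin mtopology V" "F \<subseteq> mtopology closure_of V"
    "mtopology closure_of V \<subseteq> F \<union> G"
proof -
  define I where "I = {x \<in> F. openin mtopology {x}}"
  obtain V where V: "openin mtopology V" "F - I \<subseteq> mtopology closure_of V"
    "mtopology closure_of V \<subseteq> (F - I) \<union> G"
    using exists_open_subset_closure_Un[OF G, of "F - I"] F nonisolated unfolding I_def by blast
  have "openin mtopology (\<Union>x\<in>I. {x})"
    by (rule openin_Union) (auto simp: I_def)
  then have "openin mtopology I"
    by simp
  then have "openin mtopology (V \<union> I)"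
    using V(1) by blast
  moreover have "mtopology closure_of I = I"
    using F unfolding I_def by (intro closure_of_closedin closedin_finite) auto
  then have "F \<subseteq> mtopology closure_of (V \<union> I)"
    using V(2) by auto
  moreover have "mtopology closure_of (V \<union> I) \<subseteq> F \<union> G"
    using V(3) \<open>mtopology closure_of I = I\<close> unfolding I_def by auto
  ultimately show thesis
    using that by blast
qed

lemma no_sequential_closure_cover_metric:
  assumes G: "\<And>F. finite F \<Longrightarrow> F \<subseteq> M \<Longrightarrow> openin mtopology (G F) \<and>
      (\<forall>x\<in>F. \<not> openin mtopology {x} \<longrightarrow> x \<in> mtopology closure_of G F)"
    and escape: "\<And>Fs B. \<forall>n. finite (Fs n) \<and> Fs n \<subseteq> M \<and>
        closedin mtopology (B n) \<and> B n \<subseteq> Fs n \<union> G (Fs n) \<Longrightarrow>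
      \<exists>x\<in>M. \<exists>\<^sub>F n in sequentially. x \<notin> B n"
  shows "\<exists>U. no_sequential_closure_cover mtopology U"
proof -
  have "\<exists>V. openin mtopology V \<and> F \<subseteq> mtopology closure_of V \<and> mtopology closure_of V \<subseteq> F \<union> G F"
    if F: "finite F" "F \<subseteq> M" for F
  proof -
    have "openin mtopology (G F)" "\<And>x. x \<in> F \<Longrightarrow> \<not> openin mtopology {x} \<Longrightarrow> x \<in> mtopology closure_of G F"
      using G[OF F] by auto
    then obtain V where "openin mtopology V" "F \<subseteq> mtopology closure_of V" "mtopology closure_of V \<subseteq> F \<union> G F"
      using exists_open_closure_between[OF _ F] by metis
    then show ?thesis
      by blast
  qed
  then have "\<exists>V. finite F \<and> F \<subseteq> M \<longrightarrow>
      openin mtopology V \<and> F \<subseteq> mtopology closure_of V \<and> mtopology closure_of V \<subseteq> F \<union> G F" for F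
    by blast
  then obtain U where U: "\<And>F. finite F \<Longrightarrow> F \<subseteq> M \<Longrightarrow> openin mtopology (U F) \<and>
      F \<subseteq> mtopology closure_of U F \<and> mtopology closure_of U F \<subseteq> F \<union> G F"
    by metis
  have "\<exists>x\<in>M. \<exists>\<^sub>F n in sequentially. x \<notin> mtopology closure_of U (Fs n)"
    if Fs: "\<forall>n. finite (Fs n) \<and> Fs n \<subseteq> M" for Fs
  proof -
    have "mtopology closure_of U (Fs n) \<subseteq> Fs n \<union> G (Fs n)" for n
      using U Fs by blast
    then show ?thesis
      using Fs by (intro escape[of Fs]) simp
  qed
  moreover have "\<forall>F. finite F \<and> F \<subseteq> M \<longrightarrow> openin mtopology (U F) \<and> F \<subseteq> mtopology closure_of U F"
    using U by blast
  ultimately show ?thesis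
    unfolding no_sequential_closure_cover_def topspace_mtopology by blast
qed

lemma no_sequential_closure_cover_if_uncountable_thin:
  assumes "thin_closedin mtopology N" "uncountable N"
  shows "\<exists>U. no_sequential_closure_cover mtopology U"
proof (rule no_sequential_closure_cover_metric[where G = "\<lambda>_. M - N"])
  fix F assume "finite F" "F \<subseteq> M"
  then show "openin mtopology (M - N) \<and>
    (\<forall>x\<in>F. \<not> openin mtopology {x} \<longrightarrow> x \<in> mtopology closure_of (M - N))"
    using assms(1) closure_of_complement[of mtopology N] unfolding thin_closedin_def by auto
next
  fix Fs :: "nat \<Rightarrow> 'a set" and B
  assume Fs: "\<forall>n. finite (Fs n) \<and> Fs n \<subseteq> M \<and> closedin mtopology (B n) \<and> B n \<subseteq> Fs n \<union> (M - N)"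
  then have "countable (\<Union>n. Fs n)"
    by (intro countable_UN) (auto intro: countable_finite)
  then have "\<not> N \<subseteq> (\<Union>n. Fs n)"
    using \<open>uncountable N\<close> countable_subset by blast
  then obtain x where "x \<in> N" "\<And>n. x \<notin> Fs n"
    by blast
  then have "x \<notin> B n" for n
    using Fs by blast
  moreover have "x \<in> M"
    using \<open>x \<in> N\<close> assms(1) closedin_subset unfolding thin_closedin_def by fastforce
  ultimately show "\<exists>x\<in>M. \<exists>\<^sub>F n in sequentially. x \<notin> B n"
    by (auto intro!: bexI[of _ x] simp: frequently_def)
qed

section \<open>Separated and discrete sets\<close>

definition mseparated :: "real \<Rightarrow> 'a set \<Rightarrow> bool" where
  "mseparated e S \<longleftrightarrow> S \<subseteq> M \<and> (\<forall>x\<in>S. \<forall>y\<in>S. x \<noteq> y \<longrightarrow> e \<le> d x y)"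

lemma mseparated_Union_chain:
  assumes "\<C> \<in> chains (Collect (mseparated e))"
  shows "mseparated e (\<Union>\<C>)"
proof -
  have \<C>: "\<And>S. S \<in> \<C> \<Longrightarrow> mseparated e S" and chain: "\<And>S T. S \<in> \<C> \<Longrightarrow> T \<in> \<C> \<Longrightarrow> S \<subseteq> T \<or> T \<subseteq> S"
    using assms unfolding chains_def chain_subset_def by auto
  have "e \<le> d x y" if xy: "x \<in> \<Union>\<C>" "y \<in> \<Union>\<C>" "x \<noteq> y" for x y
  proof -
    obtain S T where "S \<in> \<C>" "T \<in> \<C>" "x \<in> S" "y \<in> T"
      using xy by blast
    then obtain R where "R \<in> \<C>" "x \<in> R" "y \<in> R"
      using chain by blast
    then show ?thesis
      using \<C> \<open>x \<noteq> y\<close> unfolding mseparated_def by blast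
  qed
  moreover have "\<Union>\<C> \<subseteq> M"
    using \<C> unfolding mseparated_def by blast
  ultimately show ?thesis
    unfolding mseparated_def by blast
qed

lemma mseparated_insert:
  assumes "mseparated e S" "x \<in> M" and far: "\<And>s. s \<in> S \<Longrightarrow> e \<le> d x s"
  shows "mseparated e (insert x S)"
proof -
  have "e \<le> d u v" if uv: "u \<in> insert x S" "v \<in> insert x S" "u \<noteq> v" for u v
  proof (cases "u = x \<or> v = x")
    case True
    then consider "u = x" "v \<in> S" | "v = x" "u \<in> S"
      using uv by blast
    then show ?thesis
      by cases (auto simp: commute[of u x] intro: far)
  next
    case False
    then show ?thesis
      using uv \<open>mseparated e S\<close> unfolding mseparated_def by auto
  qed
  then show ?thesis
    using assms(1,2) unfolding mseparated_def by blast
qed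

lemma maximal_mseparated:
  assumes "e > 0"
  obtains S where "mseparated e S" "\<And>x. x \<in> M \<Longrightarrow> \<exists>s\<in>S. d x s < e"
proof -
  obtain S where S: "mseparated e S" and maximal: "\<And>T. mseparated e T \<Longrightarrow> S \<subseteq> T \<Longrightarrow> T = S"
    using Zorn_Lemma[of "Collect (mseparated e)"] mseparated_Union_chain by auto
  have "\<exists>s\<in>S. d x s < e" if "x \<in> M" for x
  proof (rule ccontr)
    assume "\<not> (\<exists>s\<in>S. d x s < e)"
    then have far: "\<And>s. s \<in> S \<Longrightarrow> e \<le> d x s"
      by force
    then have "x \<notin> S"
      using \<open>x \<in> M\<close> \<open>e > 0\<close> by fastforce
    moreover have "mseparated e (insert x S)"
      using S \<open>x \<in> M\<close> far by (rule mseparated_insert)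
    ultimately show False
      using maximal[of "insert x S"] by blast
  qed
  then show thesis
    using that S by blast
qed

lemma closedin_mseparated:
  assumes "e > 0" and S: "mseparated e S"
  shows "closedin mtopology S"
  unfolding closedin_metric
proof (intro conjI allI impI)
  show "S \<subseteq> M"
    using S unfolding mseparated_def by blast
next
  have sep: "\<And>u v. u \<in> S \<Longrightarrow> v \<in> S \<Longrightarrow> u \<noteq> v \<Longrightarrow> e \<le> d u v"
    using S unfolding mseparated_def by blast
  fix x assume x: "x \<in> M - S"
  show "\<exists>r>0. disjnt S (mball x r)"
  proof (rule ccontr)
    assume no_gap: "\<not> (\<exists>r>0. disjnt S (mball x r))"
    have near: "\<exists>s\<in>S. s \<in> M \<and> d x s < r" if "r > 0" for r
    proof -
      have "S \<inter> mball x r \<noteq> {}"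
        using no_gap that unfolding disjnt_def by blast
      then show ?thesis
        by auto
    qed
    obtain s where s: "s \<in> S" "s \<in> M" "d x s < e / 2"
      using near[of "e / 2"] \<open>e > 0\<close> by auto
    then have "d x s > 0"
      using x by auto
    then obtain t where t: "t \<in> S" "t \<in> M" "d x t < d x s"
      using near by blast
    then have "e \<le> d s t"
      using sep[OF s(1) t(1)] by auto
    also have "\<dots> \<le> d s x + d x t"
      using s(2) t(2) x by (intro triangle) auto
    also have "\<dots> < e"
      using s(3) t(3) commute[of s x] by linarith
    finally show False
      by simp
  qed
qed

definition mdiscrete :: "'a set \<Rightarrow> bool" where
  "mdiscrete S \<longleftrightarrow> (\<forall>s\<in>S. \<exists>r>0. \<forall>t\<in>S. d s t < r \<longrightarrow> t = s)"

lemma mseparated_imp_mdiscrete: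
  assumes "e > 0" "mseparated e S"
  shows "mdiscrete S"
  unfolding mdiscrete_def
proof (intro ballI exI conjI allI impI)
  fix s t assume "s \<in> S" "t \<in> S" "d s t < e"
  moreover have "s \<noteq> t \<Longrightarrow> e \<le> d s t"
    using \<open>s \<in> S\<close> \<open>t \<in> S\<close> \<open>mseparated e S\<close> unfolding mseparated_def by blast
  ultimately show "t = s"
    by force
qed (use \<open>e > 0\<close> in simp)

lemma isolated_if_in_interior_of_mdiscrete:
  assumes "mdiscrete S" "x \<in> mtopology interior_of S"
  shows "openin mtopology {x}"
proof -
  obtain r1 where "r1 > 0" "mball x r1 \<subseteq> S" "x \<in> M"
    using assms(2) in_interior_of_mball by blast
  then have "x \<in> S"
    by auto
  then obtain r2 where "r2 > 0" and near_eq: "\<And>t. t \<in> S \<Longrightarrow> d x t < r2 \<Longrightarrow> t = x"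
    using \<open>mdiscrete S\<close> unfolding mdiscrete_def by blast
  have "mball x (min r1 r2) = {x}"
  proof
    show "mball x (min r1 r2) \<subseteq> {x}"
    proof
      fix y assume y: "y \<in> mball x (min r1 r2)"
      then have "y \<in> S" "d x y < r2"
        using \<open>mball x r1 \<subseteq> S\<close> by auto
      then show "y \<in> {x}"
        using near_eq by blast
    qed
  qed (use \<open>r1 > 0\<close> \<open>r2 > 0\<close> \<open>x \<in> M\<close> in auto)
  then show ?thesis
    using openin_mball by metis
qed

lemma thin_closedin_mseparated:
  assumes "e > 0" "mseparated e S"
  shows "thin_closedin mtopology S"
  using assms closedin_mseparated mseparated_imp_mdiscrete isolated_if_in_interior_of_mdiscrete
  unfolding thin_closedin_def by blast

lemma interior_of_closure_of_mdiscrete: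
  assumes "S \<subseteq> M" and nonisolated: "\<And>s. s \<in> S \<Longrightarrow> \<not> openin mtopology {s}"
    and "mdiscrete S"
  shows "mtopology interior_of (mtopology closure_of S) = {}"
proof (rule ccontr)
  define U where "U = mtopology interior_of (mtopology closure_of S)"
  have "openin mtopology U" "U \<subseteq> mtopology closure_of S"
    unfolding U_def by (auto simp: interior_of_subset)
  assume "mtopology interior_of (mtopology closure_of S) \<noteq> {}"
  then obtain u where "u \<in> U"
    unfolding U_def by blast
  then have "u \<in> mtopology closure_of S"
    using \<open>U \<subseteq> mtopology closure_of S\<close> by blast
  then obtain s where "s \<in> S" "s \<in> U"
    using \<open>openin mtopology U\<close> \<open>u \<in> U\<close> unfolding in_closure_of by blast
  obtain r where "r > 0" and isolated_in_S: "\<And>t. t \<in> S \<Longrightarrow> d s t < r \<Longrightarrow> t = s"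
    using \<open>mdiscrete S\<close> \<open>s \<in> S\<close> unfolding mdiscrete_def by blast
  define V where "V = U \<inter> mball s r - {s}"
  have "s \<in> M"
    using \<open>s \<in> S\<close> \<open>S \<subseteq> M\<close> by blast
  then have "openin mtopology V"
    unfolding V_def using \<open>openin mtopology U\<close> closedin_finite[of "{s}"]
    by (intro openin_diff openin_Int) auto
  have "V \<noteq> {}"
  proof
    assume "V = {}"
    then have "U \<inter> mball s r = {s}"
      using \<open>s \<in> U\<close> \<open>s \<in> M\<close> \<open>r > 0\<close> unfolding V_def by auto
    then show False
      using nonisolated[OF \<open>s \<in> S\<close>] \<open>openin mtopology U\<close> by (metis openin_Int openin_mball)
  qed
  then obtain v where "v \<in> V"
    by blast
  then have "v \<in> mtopology closure_of S"
    using \<open>U \<subseteq> mtopology closure_of S\<close> unfolding V_def by blast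
  then obtain t where "t \<in> S" "t \<in> V"
    using \<open>openin mtopology V\<close> \<open>v \<in> V\<close> unfolding in_closure_of by blast
  then show False
    using isolated_in_S[of t] unfolding V_def by auto
qed

lemma mdiscrete_range_halving:
  assumes "p \<in> M" and w: "\<And>k. w k \<in> M" "\<And>k. w k \<noteq> p"
    and halving: "\<And>k. d p (w (Suc k)) < d p (w k) / 2"
  shows "inj w" "mdiscrete (range w)"
proof -
  define \<delta> where "\<delta> k = d p (w k)" for k
  have \<delta>_pos: "\<delta> k > 0" for k
    unfolding \<delta>_def using w \<open>p \<in> M\<close> by auto
  have \<delta>_antimono: "\<delta> j \<le> \<delta> i" if "i \<le> j" for i j
  proof -
    have "\<delta> (Suc n) \<le> \<delta> n" for n
      using halving[of n] \<delta>_pos[of n] unfolding \<delta>_def by linarith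
    then show ?thesis
      using lift_Suc_antimono_le[of \<delta>] that by blast
  qed
  have separated: "\<delta> k / 2 \<le> d (w k) (w i)" if "i \<noteq> k" for i k
  proof (cases "k < i")
    case True
    then have "\<delta> i < \<delta> k / 2"
      using \<delta>_antimono[of "Suc k" i] halving[of k] unfolding \<delta>_def by simp
    moreover have "\<delta> k \<le> \<delta> i + d (w i) (w k)"
      unfolding \<delta>_def using triangle[of p "w i" "w k"] w \<open>p \<in> M\<close> by simp
    ultimately show ?thesis
      using commute[of "w i" "w k"] by linarith
  next
    case False
    then have "\<delta> k < \<delta> i / 2"
      using that \<delta>_antimono[of "Suc i" k] halving[of i] unfolding \<delta>_def by simp
    moreover have "\<delta> i \<le> \<delta> k + d (w k) (w i)"
      unfolding \<delta>_def using triangle[of p "w k" "w i"] w \<open>p \<in> M\<close> by simp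
    ultimately show ?thesis
      using \<delta>_pos[of k] by linarith
  qed
  show "inj w"
  proof (rule injI, rule ccontr)
    fix i k assume "w i = w k" "i \<noteq> k"
    then show False
      using separated[of i k] \<delta>_pos[of k] w(1)[of k] by simp
  qed
  show "mdiscrete (range w)"
    unfolding mdiscrete_def
  proof
    fix s assume "s \<in> range w"
    then obtain k where "s = w k"
      by blast
    then have "\<forall>t\<in>range w. d s t < \<delta> k / 2 \<longrightarrow> t = s"
      using separated[of _ k] by force
    then show "\<exists>r>0. \<forall>t\<in>range w. d s t < r \<longrightarrow> t = s"
      using \<delta>_pos[of k] half_gt_zero by blast
  qed
qed

section \<open>Metric spaces whose thin sets are countable\<close>

lemma countable_nets_if_thin_countable:
  assumes thin_countable: "\<And>N. thin_closedin mtopology N \<Longrightarrow> countable N"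
  obtains S where "\<And>k. countable (S k)" "\<And>k. S k \<subseteq> M"
    "\<And>k x. x \<in> M \<Longrightarrow> \<exists>s\<in>S k. d x s < inverse (Suc k)"
proof -
  have "\<exists>S. countable S \<and> S \<subseteq> M \<and> (\<forall>x\<in>M. \<exists>s\<in>S. d x s < inverse (Suc k))" for k
  proof -
    have "inverse (real (Suc k)) > 0"
      by simp
    then obtain S where S: "mseparated (inverse (Suc k)) S"
      "\<And>x. x \<in> M \<Longrightarrow> \<exists>s\<in>S. d x s < inverse (Suc k)"
      using maximal_mseparated by blast
    then have "countable S"
      using thin_countable thin_closedin_mseparated \<open>inverse (real (Suc k)) > 0\<close> by blast
    moreover have "S \<subseteq> M"
      using S(1) unfolding mseparated_def by blast
    ultimately show ?thesis
      using S(2) by blast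
  qed
  then show thesis
    using that by metis
qed

lemma countable_isolated_points_if_thin_countable:
  assumes thin_countable: "\<And>N. thin_closedin mtopology N \<Longrightarrow> countable N"
  shows "countable {x \<in> M. openin mtopology {x}}"
proof -
  obtain S where S: "\<And>k. countable (S k)" "\<And>k. S k \<subseteq> M"
    and net: "\<And>k x. x \<in> M \<Longrightarrow> \<exists>s\<in>S k. d x s < inverse (Suc k)"
    using countable_nets_if_thin_countable[OF thin_countable] by blast
  have "{x \<in> M. openin mtopology {x}} \<subseteq> (\<Union>k. S k)"
  proof
    fix x assume "x \<in> {x \<in> M. openin mtopology {x}}"
    then have "x \<in> M" "openin mtopology {x}"
      by auto
    then obtain r where "r > 0" "mball x r \<subseteq> {x}"
      unfolding openin_mtopology by blast
    obtain k where "inverse (real (Suc k)) < r"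
      using reals_Archimedean \<open>r > 0\<close> by blast
    then obtain s where "s \<in> S k" "d x s < r"
      using net[OF \<open>x \<in> M\<close>, of k] by force
    then have "s \<in> mball x r"
      using S(2) \<open>x \<in> M\<close> by auto
    then show "x \<in> (\<Union>k. S k)"
      using \<open>mball x r \<subseteq> {x}\<close> \<open>s \<in> S k\<close> by blast
  qed
  moreover have "countable (\<Union>k. S k)"
    using S(1) by (intro countable_UN) auto
  ultimately show ?thesis
    using countable_subset by blast
qed

lemma nonisolated_accumulation_point_if_thin_countable:
  assumes thin_countable: "\<And>N. thin_closedin mtopology N \<Longrightarrow> countable N"
    and "uncountable M"
  obtains p where "p \<in> M" "\<And>r. r > 0 \<Longrightarrow> \<exists>y\<in>M. \<not> openin mtopology {y} \<and> y \<noteq> p \<and> d p y < r"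
proof -
  define P where "P = {x \<in> M. \<not> openin mtopology {x}}"
  have "M - P = {x \<in> topspace mtopology. openin mtopology {x}}"
    unfolding P_def by auto
  then have "closedin mtopology P"
    using openin_isolated_points[of mtopology] unfolding closedin_def P_def by auto
  have "uncountable P"
  proof
    assume "countable P"
    moreover have "countable {x \<in> M. openin mtopology {x}}"
      by (rule countable_isolated_points_if_thin_countable[OF thin_countable])
    ultimately have "countable (P \<union> {x \<in> M. openin mtopology {x}})"
      by (rule countable_Un)
    moreover have "P \<union> {x \<in> M. openin mtopology {x}} = M"
      unfolding P_def by auto
    ultimately show False
      using \<open>uncountable M\<close> by simp
  qed
  have "\<not> mdiscrete P"
  proof
    assume "mdiscrete P"
    then have "thin_closedin mtopology P"
      using \<open>closedin mtopology P\<close> isolated_if_in_interior_of_mdiscrete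
      unfolding thin_closedin_def by blast
    then show False
      using thin_countable \<open>uncountable P\<close> by blast
  qed
  then obtain p where "p \<in> P" and "\<And>r. r > 0 \<Longrightarrow> \<exists>y\<in>P. d p y < r \<and> y \<noteq> p"
    unfolding mdiscrete_def by blast
  then show thesis
    using that unfolding P_def by blast
qed

lemma infinite_nowhere_dense_if_thin_countable:
  assumes thin_countable: "\<And>N. thin_closedin mtopology N \<Longrightarrow> countable N"
    and "uncountable M"
  obtains W where "closedin mtopology W" "mtopology interior_of W = {}" "infinite W"
proof -
  obtain p where "p \<in> M"
    and near: "\<And>r. r > 0 \<Longrightarrow> \<exists>y\<in>M. \<not> openin mtopology {y} \<and> y \<noteq> p \<and> d p y < r"
    using nonisolated_accumulation_point_if_thin_countable[OF thin_countable \<open>uncountable M\<close>]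
    by blast
  have "\<exists>y. x \<in> M \<and> x \<noteq> p \<longrightarrow> y \<in> M \<and> \<not> openin mtopology {y} \<and> y \<noteq> p \<and> d p y < d p x / 2" for x
    using near[of "d p x / 2"] \<open>p \<in> M\<close> by auto
  then obtain next_point where next_point: "\<And>x. x \<in> M \<Longrightarrow> x \<noteq> p \<Longrightarrow>
      next_point x \<in> M \<and> \<not> openin mtopology {next_point x} \<and> next_point x \<noteq> p \<and>
      d p (next_point x) < d p x / 2"
    by metis
  obtain w0 where w0: "w0 \<in> M" "\<not> openin mtopology {w0}" "w0 \<noteq> p"
    using near[of 1] by auto
  define w where "w k = (next_point ^^ k) w0" for k
  have w: "w k \<in> M \<and> \<not> openin mtopology {w k} \<and> w k \<noteq> p" for k
    by (induction k) (use w0 next_point in \<open>auto simp: w_def\<close>)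
  have "d p (w (Suc k)) < d p (w k) / 2" for k
    using next_point[of "w k"] w[of k] by (simp add: w_def)
  then have "inj w" "mdiscrete (range w)"
    using mdiscrete_range_halving[OF \<open>p \<in> M\<close>] w by blast+
  then have "mtopology interior_of (mtopology closure_of (range w)) = {}"
    using w by (intro interior_of_closure_of_mdiscrete) auto
  moreover have "range w \<subseteq> mtopology closure_of (range w)"
    using w by (intro closure_of_subset) auto
  then have "infinite (mtopology closure_of (range w))"
    using range_inj_infinite[OF \<open>inj w\<close>] finite_subset by blast
  ultimately show thesis
    using that closedin_closure_of by blast
qed

lemma countable_pi_base_nonisolated_if_thin_countable:
  assumes thin_countable: "\<And>N. thin_closedin mtopology N \<Longrightarrow> countable N"
  obtains \<V> where "countable \<V>" "\<And>V. V \<in> \<V> \<Longrightarrow> openin mtopology V"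
    "\<And>V. V \<in> \<V> \<Longrightarrow> \<exists>z\<in>V. \<not> openin mtopology {z}"
    "\<And>y r. y \<in> M \<Longrightarrow> \<not> openin mtopology {y} \<Longrightarrow> r > 0 \<Longrightarrow> \<exists>V\<in>\<V>. V \<subseteq> mball y r"
proof -
  obtain S where S: "\<And>k. countable (S k)" "\<And>k. S k \<subseteq> M"
    and net: "\<And>k x. x \<in> M \<Longrightarrow> \<exists>s\<in>S k. d x s < inverse (Suc k)"
    using countable_nets_if_thin_countable[OF thin_countable] by blast
  define net_ball where "net_ball = (\<lambda>(k, s). mball s (inverse (Suc k)))"
  define \<V> where "\<V> = {V \<in> net_ball ` (SIGMA k:UNIV. S k). \<exists>z\<in>V. \<not> openin mtopology {z}}"
  have "countable (net_ball ` (SIGMA k:UNIV. S k))"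
    using S(1) by (intro countable_image countable_SIGMA) auto
  then have "countable \<V>"
    unfolding \<V>_def by (rule countable_subset[rotated]) blast
  moreover have "openin mtopology V" if "V \<in> \<V>" for V
  proof -
    obtain k s where "V = net_ball (k, s)"
      using \<open>V \<in> \<V>\<close> unfolding \<V>_def by blast
    then show ?thesis
      by (simp add: net_ball_def)
  qed
  moreover have "\<exists>V\<in>\<V>. V \<subseteq> mball y r"
    if y: "y \<in> M" "\<not> openin mtopology {y}" and "r > 0" for y r
  proof -
    have "r / 2 > 0"
      using \<open>r > 0\<close> by simp
    then obtain k where k: "inverse (real (Suc k)) < r / 2"
      using reals_Archimedean by blast
    obtain s where s: "s \<in> S k" "d y s < inverse (Suc k)"
      using net[OF \<open>y \<in> M\<close>] by blast
    have "s \<in> M"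
      using s(1) S(2) by blast
    have "y \<in> net_ball (k, s)"
      using s(2) \<open>s \<in> M\<close> y(1) commute[of y s] unfolding net_ball_def by simp
    then have "net_ball (k, s) \<in> \<V>"
      unfolding \<V>_def using s(1) y(2) by blast
    moreover have "net_ball (k, s) \<subseteq> mball y r"
    proof
      fix z assume "z \<in> net_ball (k, s)"
      then have "z \<in> M" "d s z < inverse (Suc k)"
        unfolding net_ball_def by auto
      moreover have "d y z \<le> d y s + d s z"
        using y(1) \<open>s \<in> M\<close> \<open>z \<in> M\<close> by (intro triangle)
      ultimately show "z \<in> mball y r"
        using s(2) k y(1) by simp
    qed
    ultimately show ?thesis
      by blast
  qed
  ultimately show thesis
    using that unfolding \<V>_def by blast
qed

lemma nonisolated_ball_in_closed_cover:
  assumes thin_countable: "\<And>N. thin_closedin mtopology N \<Longrightarrow> countable N"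
    and "uncountable M" and C: "\<And>m::nat. closedin mtopology (C m)" "M \<subseteq> (\<Union>m. C m)"
  obtains m y r where "y \<in> M" "\<not> openin mtopology {y}" "r > 0" "mball y r \<subseteq> C m"
proof -
  obtain m where "uncountable (C m)"
    using \<open>uncountable M\<close> C(2) countable_subset countable_UN[of UNIV C] by blast
  then obtain y where "y \<in> mtopology interior_of (C m)" "\<not> openin mtopology {y}"
    using thin_countable C(1) unfolding thin_closedin_def by blast
  then show thesis
    using that in_interior_of_mball by blast
qed

lemma frequently_outside_if_witnessed:
  assumes thin_countable: "\<And>N. thin_closedin mtopology N \<Longrightarrow> countable N"
    and "uncountable M"
    and base: "\<And>y r. y \<in> M \<Longrightarrow> \<not> openin mtopology {y} \<Longrightarrow> r > 0 \<Longrightarrow> \<exists>V\<in>\<V>. V \<subseteq> mball y r"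
    and wit: "\<And>V. V \<in> \<V> \<Longrightarrow> wit V \<in> M"
    and B: "\<And>n. closedin mtopology (B n)"
    and witnessed: "\<And>n V. V \<in> \<V> \<Longrightarrow> wit V \<in> B n \<Longrightarrow> \<not> V \<subseteq> B n"
  shows "\<exists>x\<in>M. \<exists>\<^sub>F n in sequentially. x \<notin> B n"
proof (rule ccontr)
  assume "\<not> (\<exists>x\<in>M. \<exists>\<^sub>F n in sequentially. x \<notin> B n)"
  then have eventually_in: "\<And>x. x \<in> M \<Longrightarrow> \<exists>N. \<forall>n\<ge>N. x \<in> B n"
    by (auto simp: not_frequently eventually_sequentially)
  define C where "C m = M \<inter> (\<Inter>n\<in>{m..}. B n)" for m
  have C_closed: "closedin mtopology (C m)" for m
    unfolding C_def using B by (intro closedin_Int closedin_Inter) auto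
  have C_cover: "M \<subseteq> (\<Union>m. C m)"
  proof
    fix x assume "x \<in> M"
    then obtain N where "\<forall>n\<ge>N. x \<in> B n"
      using eventually_in by blast
    then have "x \<in> C N"
      unfolding C_def using \<open>x \<in> M\<close> by auto
    then show "x \<in> (\<Union>m. C m)"
      by blast
  qed
  obtain m y r where "y \<in> M" "\<not> openin mtopology {y}" "r > 0" "mball y r \<subseteq> C m"
    by (rule nonisolated_ball_in_closed_cover[OF thin_countable \<open>uncountable M\<close> C_closed C_cover])
  then obtain V where "V \<in> \<V>" "V \<subseteq> mball y r"
    using base[of y r] by blast
  obtain N where "\<forall>n\<ge>N. wit V \<in> B n"
    using eventually_in wit[OF \<open>V \<in> \<V>\<close>] by blast
  have "C m \<subseteq> B (max m N)"
    unfolding C_def by auto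
  then have "V \<subseteq> B (max m N)"
    using \<open>V \<subseteq> mball y r\<close> \<open>mball y r \<subseteq> C m\<close> by blast
  moreover have "wit V \<in> B (max m N)"
    using \<open>\<forall>n\<ge>N. wit V \<in> B n\<close> by simp
  ultimately show False
    using witnessed[OF \<open>V \<in> \<V>\<close>] by blast
qed

lemma no_sequential_closure_cover_if_thin_countable:
  assumes thin_countable: "\<And>N. thin_closedin mtopology N \<Longrightarrow> countable N"
    and "uncountable M"
  shows "\<exists>U. no_sequential_closure_cover mtopology U"
proof -
  obtain W where "closedin mtopology W" and nowhere_dense: "mtopology interior_of W = {}"
    and "infinite W"
    using infinite_nowhere_dense_if_thin_countable[OF thin_countable \<open>uncountable M\<close>] by blast
  obtain \<V> where "countable \<V>" and \<V>_open: "\<And>V. V \<in> \<V> \<Longrightarrow> openin mtopology V"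
    and \<V>_nonisolated: "\<And>V. V \<in> \<V> \<Longrightarrow> \<exists>z\<in>V. \<not> openin mtopology {z}"
    and \<V>_base: "\<And>y r. y \<in> M \<Longrightarrow> \<not> openin mtopology {y} \<Longrightarrow> r > 0 \<Longrightarrow> \<exists>V\<in>\<V>. V \<subseteq> mball y r"
    using countable_pi_base_nonisolated_if_thin_countable[OF thin_countable] by blast
  have "infinite V" if "V \<in> \<V>" for V
    using \<V>_nonisolated[OF that] \<V>_open[OF that] infinite_open_nonisolated[OF t1_space_mtopology]
    by blast
  then obtain wit Q where wit_W: "\<And>V. wit V \<in> W" and Q_finite: "\<And>F. finite F \<Longrightarrow> finite (Q F)"
    and "\<And>F. finite F \<Longrightarrow> Q F \<subseteq> \<Union>\<V>"
    and Q_removes: "\<And>F V. finite F \<Longrightarrow> V \<in> \<V> \<Longrightarrow> wit V \<in> F \<Longrightarrow> \<exists>q \<in> V \<inter> Q F. q \<notin> F"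
    using finite_witness_removal[OF \<open>countable \<V>\<close> \<open>infinite W\<close>] by blast
  have "V \<subseteq> M" if "V \<in> \<V>" for V
    using openin_subset[OF \<V>_open[OF that]] by simp
  then have Q_M: "Q F \<subseteq> M" if "finite F" for F
    using \<open>\<And>F. finite F \<Longrightarrow> Q F \<subseteq> \<Union>\<V>\<close>[OF that] by blast
  show ?thesis
  proof (rule no_sequential_closure_cover_metric[where G = "\<lambda>F. M - (W \<union> Q F)"])
    fix F assume "finite F" "F \<subseteq> M"
    have "closedin mtopology (W \<union> Q F)"
      using Q_finite[OF \<open>finite F\<close>] Q_M[OF \<open>finite F\<close>]
      by (intro closedin_Un \<open>closedin mtopology W\<close> closedin_finite)
    moreover have "x \<in> mtopology closure_of (M - (W \<union> Q F))"
      if "x \<in> F" "\<not> openin mtopology {x}" for x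
      using nonisolated_in_closure_of_complement[OF t1_space_mtopology \<open>closedin mtopology W\<close>
          nowhere_dense Q_finite[OF \<open>finite F\<close>]] that \<open>F \<subseteq> M\<close> by auto
    ultimately show "openin mtopology (M - (W \<union> Q F)) \<and>
      (\<forall>x\<in>F. \<not> openin mtopology {x} \<longrightarrow> x \<in> mtopology closure_of (M - (W \<union> Q F)))"
      unfolding closedin_def by simp
  next
    fix Fs :: "nat \<Rightarrow> 'a set" and B
    assume Fs: "\<forall>n. finite (Fs n) \<and> Fs n \<subseteq> M \<and> closedin mtopology (B n) \<and>
      B n \<subseteq> Fs n \<union> (M - (W \<union> Q (Fs n)))"
    have "\<not> V \<subseteq> B n" if "V \<in> \<V>" "wit V \<in> B n" for n V
    proof -
      have "wit V \<in> Fs n"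
        using Fs wit_W that(2) by blast
      moreover have "finite (Fs n)"
        using Fs by blast
      ultimately obtain q where "q \<in> V" "q \<in> Q (Fs n)" "q \<notin> Fs n"
        using Q_removes[OF _ \<open>V \<in> \<V>\<close>] by blast
      then have "q \<notin> B n"
        using Fs by blast
      then show ?thesis
        using \<open>q \<in> V\<close> by blast
    qed
    moreover have "wit V \<in> M" for V
      using wit_W closedin_subset[OF \<open>closedin mtopology W\<close>] by auto
    moreover have "closedin mtopology (B n)" for n
      using Fs by blast
    ultimately show "\<exists>x\<in>M. \<exists>\<^sub>F n in sequentially. x \<notin> B n"
      using frequently_outside_if_witnessed[OF thin_countable \<open>uncountable M\<close> \<V>_base] by blast
  qed
qed

end

lemma not_frechet_urysohn_Qp_if_uncountable:
  assumes "metrizable_space X" "t1_space Y" "a \<in> topspace Y" "b \<in> topspace Y" "a \<noteq> b"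
    and "uncountable (topspace X)"
  shows "\<not> frechet_urysohn (Qp X Y)"
proof -
  obtain M d where "Metric_space M d" and X: "X = Metric_space.mtopology M d"
    using assms(1) metrizable_space_def by blast
  interpret Metric_space M d
    by fact
  have "uncountable M"
    using assms(6) X by simp
  then have "\<exists>U. no_sequential_closure_cover mtopology U"
    using no_sequential_closure_cover_if_uncountable_thin no_sequential_closure_cover_if_thin_countable
    by blast
  then obtain U where "no_sequential_closure_cover mtopology U"
    by blast
  then show ?thesis
    unfolding X by (rule not_frechet_urysohn_Qp[OF assms(2-5)])
qed

theorem corollary7p2:
  fixes X :: "'a topology" and Y :: "'b topology"
  assumes "metrizable_space X" and "metrizable_space Y"
    and "nontrivial_space X" and "nontrivial_space Y"
  shows "(countable (topspace X) \<longleftrightarrow> frechet_urysohn (Qp X two_point_discrete))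
       \<and> (countable (topspace X) \<longleftrightarrow> frechet_urysohn (Qp X Y))
       \<and> (countable (topspace X) \<longleftrightarrow> first_countable (Qp X Y))
       \<and> (countable (topspace X) \<longleftrightarrow> metrizable_space (Qp X Y))"
proof (cases "countable (topspace X)")
  case True
  have "metrizable_space two_point_discrete"
    unfolding two_point_discrete_def by simp
  then have "metrizable_space (Qp X two_point_discrete)" "metrizable_space (Qp X Y)"
    using metrizable_space_Qp True assms(2) by blast+
  then show ?thesis
    using True by (simp add: metrizable_imp_frechet_urysohn metrizable_imp_first_countable)
next
  case False
  have "\<not> frechet_urysohn (Qp X two_point_discrete)"
    using assms(1) False
    by (intro not_frechet_urysohn_Qp_if_uncountable[where a = True and b = False]) (simp_all add: two_point_discrete_def Hausdorff_imp_t1_space Hausdorff_space_discrete_topology)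
  moreover obtain a b where "a \<in> topspace Y" "b \<in> topspace Y" "a \<noteq> b"
    using assms(4) unfolding nontrivial_space_def by blast
  then have "\<not> frechet_urysohn (Qp X Y)"
    using metrizable_imp_t1_space[OF assms(2)] False
    by (intro not_frechet_urysohn_Qp_if_uncountable[OF assms(1)])
  then have "\<not> first_countable (Qp X Y)" "\<not> metrizable_space (Qp X Y)"
    using first_countable_imp_frechet_urysohn metrizable_imp_frechet_urysohn by blast+
  ultimately show ?thesis
    using False \<open>\<not> frechet_urysohn (Qp X Y)\<close> by simp
qed

end
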